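(* Let $k\geq2$ and let $a_1\leq a_2\leq\dots\leq a_k$ be positive integers with $\gcd(a_1,\dots,a_k)=1$, let $S=\langle a_1,\dots,a_k\rangle$, and let $\alpha\geq a_1a_2$ be an integer. Then $$n(S,\alpha)\leq a_1^{k-1}\left(\left\lfloor\frac{\alpha}{a_1}-a_2\right\rfloor+1\right)+\sum_{\lambda=0}^{a_2-1}\left(\left\lfloor a_1\cdot\frac{\lambda+\{\alpha/a_1\}}{a_2}\right\rfloor+1\right)^{k-1}.$$
   Context: $S=\langle a_1,\dots,a_k\rangle=\{\lambda_1a_1+\dots+\lambda_ka_k:\lambda_i\in\mathbb{Z}_{\geq0}\}$; $n(S,\alpha)$ is the number of elements $s\in S$ with $s\leq\alpha$; $\{t\}=t-\lfloor t\rfloor$ denotes the fractional part. *)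

theory Defs
  imports "HOL-Analysis.Analysis"
begin

definition semigroup_gen :: "nat \<Rightarrow> (nat \<Rightarrow> nat) \<Rightarrow> nat set" where
  "semigroup_gen k a = {s. \<exists>lam :: nat \<Rightarrow> nat. s = (\<Sum>i=1..k. lam i * a i)}"

definition count_le :: "nat set \<Rightarrow> int \<Rightarrow> nat" where
  "count_le S \<alpha> = card {s \<in> S. int s \<le> \<alpha>}"

definition fracpart :: "real \<Rightarrow> real" where
  "fracpart t = t - real_of_int \<lfloor>t\<rfloor>"

end

theory Submission
  imports Defs
begin

text \<open>Reducing the coefficients of \<open>a 2, \<dots>, a k\<close> modulo \<open>a 1\<close> writes every \<open>s \<in> S\<close>
  as \<open>s = j * a 1 + v 2 * a 2 + \<dots> + v k * a k\<close> with \<open>v i < a 1\<close>. If \<open>s \<le> \<alpha>\<close> then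
  \<open>j \<le> q = \<alpha> div a 1\<close>, and each \<open>j\<close> admits at most \<open>a 1 ^ (k - 1)\<close> tails \<open>v\<close>. For the
  top \<open>a 2\<close> values \<open>j = q - l\<close> the tail sum is at most \<open>l * a 1 + \<alpha> mod a 1\<close>, and since
  \<open>a i \<ge> a 2\<close> every \<open>v i\<close> is then at most \<open>(l * a 1 + \<alpha> mod a 1) div a 2\<close>; this gives
  the second summand.\<close>

lemma semigroup_gen_reduced_repr:
  assumes "s \<in> semigroup_gen k a" and "a 1 > 0" and "1 \<le> k"
  obtains j v where "v \<in> {2..k} \<rightarrow>\<^sub>E {..<a 1}" and "s = j * a 1 + (\<Sum>i=2..k. v i * a i)"
proof -
  obtain lam where s: "s = (\<Sum>i=1..k. lam i * a i)"
    using assms(1) unfolding semigroup_gen_def by blast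
  define v where "v = restrict (\<lambda>i. lam i mod a 1) {2..k}"
  define j where "j = lam 1 + (\<Sum>i=2..k. lam i div a 1 * a i)"
  have v: "v \<in> {2..k} \<rightarrow>\<^sub>E {..<a 1}"
    unfolding v_def using assms(2) by auto
  have "{1..k} = insert 1 {2..k}"
    using assms(3) by auto
  then have "s = lam 1 * a 1 + (\<Sum>i=2..k. lam i * a i)"
    unfolding s by simp
  also have "(\<Sum>i=2..k. lam i * a i) = (\<Sum>i=2..k. lam i div a 1 * a i * a 1 + v i * a i)"
  proof (rule sum.cong)
    fix i assume "i \<in> {2..k}"
    then have "v i = lam i mod a 1"
      by (simp add: v_def)
    then show "lam i * a i = lam i div a 1 * a i * a 1 + v i * a i"
      by (metis add_mult_distrib div_mult_mod_eq mult.assoc mult.commute)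
  qed simp
  also have "\<dots> = (\<Sum>i=2..k. lam i div a 1 * a i) * a 1 + (\<Sum>i=2..k. v i * a i)"
    by (simp add: sum.distrib sum_distrib_right)
  finally have "s = j * a 1 + (\<Sum>i=2..k. v i * a i)"
    unfolding j_def by (simp add: algebra_simps)
  with v that show ?thesis by blast
qed

definition reduced_fibre :: "nat \<Rightarrow> (nat \<Rightarrow> nat) \<Rightarrow> nat \<Rightarrow> nat \<Rightarrow> (nat \<Rightarrow> nat) set" where
  "reduced_fibre k a A j = {v \<in> {2..k} \<rightarrow>\<^sub>E {..<a 1}. j * a 1 + (\<Sum>i=2..k. v i * a i) \<le> A}"

lemma finite_reduced_fibre: "finite (reduced_fibre k a A j)"
  unfolding reduced_fibre_def by (simp add: finite_PiE)

lemma card_semigroup_gen_le_sum_fibres: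
  assumes "a 1 > 0" and "1 \<le> k"
  shows "card {s \<in> semigroup_gen k a. s \<le> A} \<le> (\<Sum>j\<le>A div a 1. card (reduced_fibre k a A j))"
proof -
  define f where "f = (\<lambda>(j, v). j * a 1 + (\<Sum>i=2..k. v i * a i))"
  have "{s \<in> semigroup_gen k a. s \<le> A} \<subseteq> f ` Sigma {..A div a 1} (reduced_fibre k a A)"
  proof
    fix s assume "s \<in> {s \<in> semigroup_gen k a. s \<le> A}"
    then have "s \<in> semigroup_gen k a" and "s \<le> A" by auto
    then obtain j v where v: "v \<in> {2..k} \<rightarrow>\<^sub>E {..<a 1}" and s: "s = j * a 1 + (\<Sum>i=2..k. v i * a i)"
      using semigroup_gen_reduced_repr assms by metis
    with \<open>s \<le> A\<close> have "j \<le> A div a 1"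
      using assms(1) by (simp add: less_eq_div_iff_mult_less_eq)
    with v s \<open>s \<le> A\<close> show "s \<in> f ` Sigma {..A div a 1} (reduced_fibre k a A)"
      unfolding reduced_fibre_def f_def by force
  qed
  then have "card {s \<in> semigroup_gen k a. s \<le> A} \<le> card (f ` Sigma {..A div a 1} (reduced_fibre k a A))"
    by (intro card_mono finite_imageI) (auto intro: finite_reduced_fibre)
  also have "\<dots> \<le> card (Sigma {..A div a 1} (reduced_fibre k a A))"
    by (rule card_image_le) (auto intro: finite_reduced_fibre)
  also have "\<dots> = (\<Sum>j\<le>A div a 1. card (reduced_fibre k a A j))"
    by (simp add: finite_reduced_fibre)
  finally show ?thesis .
qed

lemma le_div_of_weighted_sum_le:
  fixes v w :: "'a \<Rightarrow> nat"
  assumes "finite I" and "i \<in> I" and "(\<Sum>i\<in>I. v i * w i) \<le> B" and "b \<le> w i" and "0 < b"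
  shows "v i \<le> B div b"
proof -
  have "v i * b \<le> v i * w i"
    using assms(4) by simp
  also have "\<dots> \<le> (\<Sum>i\<in>I. v i * w i)"
    by (rule member_le_sum) (use assms(1,2) in auto)
  finally show ?thesis
    using assms(3,5) by (simp add: less_eq_div_iff_mult_less_eq)
qed

lemma card_weighted_sum_le:
  assumes "\<forall>i\<in>{2..k}. b \<le> a i" and "0 < b"
  shows "card {v \<in> {2..k} \<rightarrow>\<^sub>E X. (\<Sum>i=2..k. v i * a i) \<le> B} \<le> (B div b + 1) ^ (k - 1)"
proof -
  have "{v \<in> {2..k} \<rightarrow>\<^sub>E X. (\<Sum>i=2..k. v i * a i) \<le> B} \<subseteq> {2..k} \<rightarrow>\<^sub>E {..B div b}"
  proof
    fix v assume "v \<in> {v \<in> {2..k} \<rightarrow>\<^sub>E X. (\<Sum>i=2..k. v i * a i) \<le> B}"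
    then have "v \<in> extensional {2..k}" and "(\<Sum>i=2..k. v i * a i) \<le> B"
      by (auto simp: PiE_def)
    moreover have "v i \<le> B div b" if "i \<in> {2..k}" for i
      using le_div_of_weighted_sum_le[of "{2..k}"] \<open>(\<Sum>i=2..k. v i * a i) \<le> B\<close> assms that by simp
    ultimately show "v \<in> {2..k} \<rightarrow>\<^sub>E {..B div b}"
      by (simp add: PiE_def Pi_def)
  qed
  then have "card {v \<in> {2..k} \<rightarrow>\<^sub>E X. (\<Sum>i=2..k. v i * a i) \<le> B} \<le> card ({2..k} \<rightarrow>\<^sub>E {..B div b})"
    by (intro card_mono) (simp_all add: finite_PiE)
  then show ?thesis
    by (simp add: card_PiE)
qed

lemma sum_atMost_split_top:
  fixes f :: "nat \<Rightarrow> 'a::comm_monoid_add"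
  assumes "b \<le> q"
  shows "(\<Sum>j\<le>q. f j) = (\<Sum>j\<le>q - b. f j) + (\<Sum>l<b. f (q - l))"
  using assms
proof (induction b)
  case (Suc b)
  have "q - b = Suc (q - Suc b)"
    using Suc.prems by simp
  then have "(\<Sum>j\<le>q - b. f j) = (\<Sum>j\<le>q - Suc b. f j) + f (q - b)"
    by simp
  with Suc show ?case
    by (simp add: ac_simps)
qed simp

lemma card_semigroup_gen_le:
  assumes "1 \<le> k" and "a 1 > 0" and "\<forall>i\<in>{2..k}. a 2 \<le> a i" and "a 1 * a 2 \<le> A"
  shows "card {s \<in> semigroup_gen k a. s \<le> A}
    \<le> a 1 ^ (k - 1) * (A div a 1 - a 2 + 1) + (\<Sum>l<a 2. ((l * a 1 + A mod a 1) div a 2 + 1) ^ (k - 1))"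
proof -
  define q where "q = A div a 1"
  define F where "F = reduced_fibre k a A"
  have "a 2 \<le> q"
    using assms(2,4) unfolding q_def by (simp add: less_eq_div_iff_mult_less_eq mult.commute)
  have box_bound: "card (F j) \<le> a 1 ^ (k - 1)" for j
  proof -
    have "card (F j) \<le> card ({2..k} \<rightarrow>\<^sub>E {..<a 1})"
      unfolding F_def reduced_fibre_def by (intro card_mono) (auto simp: finite_PiE)
    then show ?thesis
      by (simp add: card_PiE)
  qed
  have top_bound: "card (F (q - l)) \<le> ((l * a 1 + A mod a 1) div a 2 + 1) ^ (k - 1)" if "l < a 2" for l
  proof -
    have "(q - l) * a 1 + l * a 1 = q * a 1"
      using that \<open>a 2 \<le> q\<close> by (metis add_mult_distrib le_add_diff_inverse2 less_imp_le order_trans)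
    then have "A = (q - l) * a 1 + (l * a 1 + A mod a 1)"
      using div_mult_mod_eq[of A "a 1"] unfolding q_def by linarith
    then have "F (q - l) \<subseteq> {v \<in> {2..k} \<rightarrow>\<^sub>E {..<a 1}. (\<Sum>i=2..k. v i * a i) \<le> l * a 1 + A mod a 1}"
      unfolding F_def reduced_fibre_def by auto
    then have "card (F (q - l)) \<le> card {v \<in> {2..k} \<rightarrow>\<^sub>E {..<a 1}. (\<Sum>i=2..k. v i * a i) \<le> l * a 1 + A mod a 1}"
      by (intro card_mono) (auto simp: finite_PiE)
    also have "\<dots> \<le> ((l * a 1 + A mod a 1) div a 2 + 1) ^ (k - 1)"
      using assms(3) that by (intro card_weighted_sum_le) auto
    finally show ?thesis .
  qed
  have "card {s \<in> semigroup_gen k a. s \<le> A} \<le> (\<Sum>j\<le>q. card (F j))"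
    unfolding q_def F_def using assms(2,1) by (rule card_semigroup_gen_le_sum_fibres)
  also have "\<dots> = (\<Sum>j\<le>q - a 2. card (F j)) + (\<Sum>l<a 2. card (F (q - l)))"
    using \<open>a 2 \<le> q\<close> by (rule sum_atMost_split_top)
  also have "\<dots> \<le> (\<Sum>j\<le>q - a 2. a 1 ^ (k - 1)) + (\<Sum>l<a 2. ((l * a 1 + A mod a 1) div a 2 + 1) ^ (k - 1))"
    by (intro add_mono sum_mono box_bound top_bound) simp
  finally show ?thesis
    unfolding q_def by (simp add: mult.commute)
qed

lemma floor_of_nat_div_diff:
  "\<lfloor>real n / real m - real b\<rfloor> = int (n div m) - int b"
  using floor_diff_of_int[of "real n / real m" "int b"] by (simp add: floor_divide_of_nat_eq)

lemma fracpart_of_nat_div: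
  assumes "m > 0"
  shows "fracpart (real n / real m) = real (n mod m) / real m"
proof -
  have "fracpart (real n / real m) = real n / real m - real (n div m)"
    unfolding fracpart_def by (simp add: floor_divide_of_nat_eq)
  moreover have "real n = real (n div m) * real m + real (n mod m)"
    by (metis div_mult_mod_eq of_nat_add of_nat_mult)
  ultimately show ?thesis
    using assms by (simp add: field_simps)
qed

lemma floor_mult_fracpart_of_nat_div:
  assumes "m > 0"
  shows "\<lfloor>real m * ((real l + fracpart (real n / real m)) / real b)\<rfloor> = int ((l * m + n mod m) div b)"
proof -
  have "real m * (real l + fracpart (real n / real m)) = real (l * m + n mod m)"
    using assms by (simp add: fracpart_of_nat_div field_simps)
  then have "real m * ((real l + fracpart (real n / real m)) / real b) = real (l * m + n mod m) / real b"
    by (metis times_divide_eq_right)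
  then show ?thesis
    by (metis floor_divide_of_nat_eq)
qed

theorem mainTheorem8:
  fixes k :: nat and a :: "nat \<Rightarrow> nat" and \<alpha> :: int
  assumes "k \<ge> 2"
    and "\<And>i. 1 \<le> i \<Longrightarrow> i \<le> k \<Longrightarrow> a i > 0"
    and "\<And>i j. 1 \<le> i \<Longrightarrow> i \<le> j \<Longrightarrow> j \<le> k \<Longrightarrow> a i \<le> a j"
    and "Gcd (a ` {1..k}) = 1"
    and "\<alpha> \<ge> int (a 1 * a 2)"
  shows "real (count_le (semigroup_gen k a) \<alpha>)
    \<le> real (a 1) ^ (k - 1) * (real_of_int \<lfloor>real_of_int \<alpha> / real (a 1) - real (a 2)\<rfloor> + 1)
      + (\<Sum>l = 0..<a 2.
          (real_of_int \<lfloor>real (a 1) * ((real l + fracpart (real_of_int \<alpha> / real (a 1))) / real (a 2))\<rfloor> + 1) ^ (k - 1))"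
proof -
  obtain A where A: "\<alpha> = int A" and "a 1 * a 2 \<le> A"
    using assms(5) by (metis nonneg_int_cases of_nat_0_le_iff order_trans of_nat_le_iff)
  have "a 1 > 0" and "\<forall>i\<in>{2..k}. a 2 \<le> a i"
    using assms(1-3) by auto
  then have "a 2 \<le> A div a 1"
    using \<open>a 1 * a 2 \<le> A\<close> by (simp add: less_eq_div_iff_mult_less_eq mult.commute)
  have floor_quot: "real (A div a 1 - a 2) = real_of_int \<lfloor>real_of_int \<alpha> / real (a 1) - real (a 2)\<rfloor>"
    using \<open>a 2 \<le> A div a 1\<close> unfolding A by (simp add: floor_of_nat_div_diff of_nat_diff)
  have floor_frac: "real ((l * a 1 + A mod a 1) div a 2)
      = real_of_int \<lfloor>real (a 1) * ((real l + fracpart (real_of_int \<alpha> / real (a 1))) / real (a 2))\<rfloor>" for l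
    using floor_mult_fracpart_of_nat_div[OF \<open>a 1 > 0\<close>, of l A "a 2"] unfolding A by simp
  have "count_le (semigroup_gen k a) \<alpha> \<le> a 1 ^ (k - 1) * (A div a 1 - a 2 + 1)
      + (\<Sum>l<a 2. ((l * a 1 + A mod a 1) div a 2 + 1) ^ (k - 1))"
    using card_semigroup_gen_le[of k a A] assms(1) \<open>a 1 > 0\<close> \<open>\<forall>i\<in>{2..k}. a 2 \<le> a i\<close> \<open>a 1 * a 2 \<le> A\<close>
    unfolding count_le_def A by simp
  then have "real (count_le (semigroup_gen k a) \<alpha>) \<le> real (a 1 ^ (k - 1) * (A div a 1 - a 2 + 1)
      + (\<Sum>l<a 2. ((l * a 1 + A mod a 1) div a 2 + 1) ^ (k - 1)))"
    by (simp only: of_nat_le_iff)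
  then show ?thesis
    by (simp only: of_nat_add of_nat_mult of_nat_power of_nat_sum of_nat_1 floor_quot floor_frac atLeast0LessThan)
qed

end
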